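(* In the noisy search problem with $1/\delta=2^L$ using the $hiePM$ strategy described in the context, for every level $l<L$ the nested log-likelihood $U^{\{l\}}(t)$ is a submartingale; more precisely, for all $t>0$, $$\mathbb{E}[U^{\{l\}}(t+1)\mid\pi(t)]-U^{\{l\}}(t)\ge K_h:=\min\Big\{I\big(\tfrac13,p[\tfrac12]\big),\ \tfrac23 D\big(\tfrac13 B_1+\tfrac23 B_0\,\|\,B_0\big)\Big\},$$ where $B_1=\mathrm{Bern}(1-p[1/2])$, $B_0=\mathrm{Bern}(p[1/2])$.
   Context: Search problem: fix $\delta\in(0,1)$ with $N=1/\delta=2^L$, $L$ an integer. A target index $\theta$ is uniform on $\{1,\dots,N\}$. A noise profile $p:(0,1)\to(0,1/2)$ is continuous and non-decreasing; $p[x]:=p(x)$. At each time $t$ a query set $S_t$ is chosen from the past and one observes $Y_t=\mathbb{1}(\theta\in S_t)\oplus Z_t$ with, conditionally on $S_t$, $Z_t\sim\mathrm{Bern}(p[\delta|S_t|])$ conditionally i.i.d. across time. Posterior $\pi_i(t)=\mathbb{P}(\theta=i\mid S_1^t,Y_1^t)$, $\pi_i(0)=\delta$; $\pi_S=\sum_{i\in S}\pi_i$. $hiePM$: $H_l^m=\{m2^{L-l}+1,\dots,(m+1)2^{L-l}\}$ for $l=0,\dots,L$, $m=0,\dots,2^l-1$. At time $t$, $l^*_t$ is the largest $l$ with $\max_m\pi_{H_l^m}(t)\ge\tfrac12$, $m^*_t=\arg\max_m\pi_{H^m_{l^*_t}}(t)$, $(l_{t+1},m_{t+1})$ minimizes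 $|\pi_{H^{m'}_{l'}}(t)-\tfrac12|$ over $\{(l^*_t,m^*_t),(l^*_t+1,2m^*_t),(l^*_t+1,2m^*_t+1)\}$, and $S_{t+1}=H^{m_{t+1}}_{l_{t+1}}$. Nested log-likelihood: for $q=1,\dots,2^l$, $\mathrm{bin}(q)=\{(q-1)2^{L-l}+1,\dots,q2^{L-l}\}$, $\pi^{\{l\}}_q(t)=\sum_{i\in\mathrm{bin}(q)}\pi_i(t)$, $U^{\{l\}}(t)=\sum_{q=1}^{2^l}\pi^{\{l\}}_q(t)\log\frac{\pi^{\{l\}}_q(t)}{1-\pi^{\{l\}}_q(t)}$. $D(\cdot\|\cdot)$ is KL divergence; convex combinations of Bernoulli distributions denote mixtures; $I(q,p)$ is the mutual information between input $\mathrm{Bern}(q)$ and the output of a binary symmetric channel with crossover probability $p$. *)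

theory Defs
  imports "HOL-Analysis.Analysis"
begin

text \<open>Noisy search with N = 2^L cells, indices 1..N, delta = 1/2^L.
  A posterior is a function pi :: nat => real; only its values on 1..N matter.\<close>

definition cells :: "nat \<Rightarrow> nat set" where
  "cells L = {1..2^L}"

definition Hset :: "nat \<Rightarrow> nat \<Rightarrow> nat \<Rightarrow> nat set" where
  "Hset L l m = {m * 2^(L - l) + 1 .. (m + 1) * 2^(L - l)}"

definition mass :: "(nat \<Rightarrow> real) \<Rightarrow> nat set \<Rightarrow> real" where
  "mass \<pi> A = (\<Sum>i\<in>A. \<pi> i)"

text \<open>Nested log-likelihood U^{l}; bin(q) = H_l^{q-1}.\<close>
definition Unest :: "nat \<Rightarrow> nat \<Rightarrow> (nat \<Rightarrow> real) \<Rightarrow> real" where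
  "Unest L l \<pi> = (\<Sum>q\<in>{1..2^l}. mass \<pi> (Hset L l (q - 1)) *
        ln (mass \<pi> (Hset L l (q - 1)) / (1 - mass \<pi> (Hset L l (q - 1)))))"

text \<open>hiePM query rule: S is a query set admissible for posterior pi
  (any tie-breaking in the arg max / arg min is allowed).\<close>
definition hie_candidates :: "nat \<Rightarrow> nat \<Rightarrow> nat \<Rightarrow> (nat \<times> nat) set" where
  "hie_candidates L ls ms =
     {(ls, ms)} \<union> (if ls < L then {(ls + 1, 2 * ms), (ls + 1, 2 * ms + 1)} else {})"

definition hie_query :: "nat \<Rightarrow> (nat \<Rightarrow> real) \<Rightarrow> nat set \<Rightarrow> bool" where
  "hie_query L \<pi> S \<longleftrightarrow>
     (\<exists>ls ms l' m'.
        ls \<le> L \<and> ms < 2^ls \<and>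
        (\<exists>m<2^ls. mass \<pi> (Hset L ls m) \<ge> 1/2) \<and>
        (\<forall>l2. ls < l2 \<and> l2 \<le> L \<longrightarrow> (\<forall>m<2^l2. mass \<pi> (Hset L l2 m) < 1/2)) \<and>
        (\<forall>m<2^ls. mass \<pi> (Hset L ls m) \<le> mass \<pi> (Hset L ls ms)) \<and>
        (l', m') \<in> hie_candidates L ls ms \<and>
        (\<forall>(l2, m2)\<in>hie_candidates L ls ms.
            \<bar>mass \<pi> (Hset L l' m') - 1/2\<bar> \<le> \<bar>mass \<pi> (Hset L l2 m2) - 1/2\<bar>) \<and>
        S = Hset L l' m')"

text \<open>Observation model: Y = 1(theta in S) xor Z, Z ~ Bern(p[delta |S|]).
  lik L p S y i = P(Y = y | theta = i, S), with y = True meaning Y = 1.\<close>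
definition lik :: "nat \<Rightarrow> (real \<Rightarrow> real) \<Rightarrow> nat set \<Rightarrow> bool \<Rightarrow> nat \<Rightarrow> real" where
  "lik L p S y i = (let q = p (real (card S) / 2^L) in
                    if (i \<in> S) = y then 1 - q else q)"

definition prob_obs :: "nat \<Rightarrow> (real \<Rightarrow> real) \<Rightarrow> (nat \<Rightarrow> real) \<Rightarrow> nat set \<Rightarrow> bool \<Rightarrow> real" where
  "prob_obs L p \<pi> S y = (\<Sum>j\<in>cells L. \<pi> j * lik L p S y j)"

definition post :: "nat \<Rightarrow> (real \<Rightarrow> real) \<Rightarrow> (nat \<Rightarrow> real) \<Rightarrow> nat set \<Rightarrow> bool \<Rightarrow> nat \<Rightarrow> real" where
  "post L p \<pi> S y i = \<pi> i * lik L p S y i / prob_obs L p \<pi> S y"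

inductive reach :: "nat \<Rightarrow> (real \<Rightarrow> real) \<Rightarrow> nat \<Rightarrow> (nat \<Rightarrow> real) \<Rightarrow> bool"
  for L p where
  init: "reach L p 0 (\<lambda>i. if i \<in> cells L then 1 / 2^L else 0)"
| step: "reach L p t \<pi> \<Longrightarrow> hie_query L \<pi> S \<Longrightarrow> reach L p (Suc t) (post L p \<pi> S y)"

definition KL_bern :: "real \<Rightarrow> real \<Rightarrow> real" where
  "KL_bern a b = a * ln (a / b) + (1 - a) * ln ((1 - a) / (1 - b))"

definition MI_bsc :: "real \<Rightarrow> real \<Rightarrow> real" where
  "MI_bsc q p =
     (let px = (\<lambda>x::bool. if x then q else 1 - q);
          pyx = (\<lambda>x y::bool. if x = y then 1 - p else p);
          py = (\<lambda>y. px True * pyx True y + px False * pyx False y)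
      in (\<Sum>x\<in>UNIV. \<Sum>y\<in>UNIV. px x * pyx x y * ln (pyx x y / py y)))"

definition K_h :: "(real \<Rightarrow> real) \<Rightarrow> real" where
  "K_h p = min (MI_bsc (1/3) (p (1/2)))
               (2/3 * KL_bern (1/3 * (1 - p (1/2)) + 2/3 * p (1/2)) (p (1/2)))"

end

theory Submission
  imports Defs
begin

text \<open>
  With xlogit x = x log (x / (1 - x)), the drift of U^{l} is the sum over the level-l bins of
  the drift of xlogit of the bin mass. A hiePM query is a node H_{l'}^{m'} of mass s in
  [1/3, 2/3] (or at least 1/2 when l' = L). If l' \<le> l, every bin lies inside or outside the
  query, so its posterior mass is its prior mass times a likelihood ratio; convexity of
  -x log (1 - x) bounds its drift by its mass times the divergence of its observation law from
  the marginal one, and summing gives the mutual information I(s, q) of the channel. If l' > l,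
  the query lies in a single bin whose complement mass is rescaled instead; convexity of
  x log x bounds the drift of that bin by D(marginal || Bern(q)), and the other bins have
  nonnegative drift. Both bounds decrease in the noise q \<le> p[1/2] and are smallest at s = 1/3.
\<close>

section \<open>Binary entropy, divergence and mutual information\<close>

definition binary_entropy :: "real \<Rightarrow> real" where
  "binary_entropy x = - (x * ln x) - (1 - x) * ln (1 - x)"

definition bern :: "real \<Rightarrow> bool \<Rightarrow> real" where
  "bern u y = (if y then u else 1 - u)"

definition bsc_out :: "real \<Rightarrow> real \<Rightarrow> real" where
  "bsc_out s q = s * (1 - q) + (1 - s) * q"

lemma bern_pos: "0 < u \<Longrightarrow> u < 1 \<Longrightarrow> 0 < bern u y"
  by (simp add: bern_def)

lemma sum_bern: "(\<Sum>y\<in>UNIV. bern u y) = 1"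
  by (simp add: UNIV_bool bern_def)

lemma KL_bern_eq_sum: "KL_bern a b = (\<Sum>y\<in>UNIV. bern a y * ln (bern a y / bern b y))"
  by (simp add: KL_bern_def bern_def UNIV_bool)

lemma bern_bsc_out: "bern (bsc_out s q) y = s * bern (1 - q) y + (1 - s) * bern q y"
  by (simp add: bern_def bsc_out_def algebra_simps)

lemma bsc_out_bounds:
  assumes "0 \<le> s" "s \<le> 1" "0 < q" "q < 1"
  shows "0 < bsc_out s q" "bsc_out s q < 1"
proof -
  have "s * (1 - q) + (1 - s) * q < 1"
    using assms by (intro convex_bound_lt) auto
  moreover have "s * (- (1 - q)) + (1 - s) * (- q) < 0"
    using assms by (intro convex_bound_lt) auto
  ultimately show "0 < bsc_out s q" "bsc_out s q < 1"
    by (simp_all add: bsc_out_def algebra_simps)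
qed

lemma bsc_out_mono:
  assumes "s \<le> s'" "q \<le> 1 / 2"
  shows "bsc_out s q \<le> bsc_out s' q"
proof -
  have "s * (1 - 2 * q) \<le> s' * (1 - 2 * q)"
    using assms by (intro mult_right_mono) auto
  then show ?thesis
    by (simp add: bsc_out_def algebra_simps)
qed

lemma bsc_out_third: "bsc_out (1 / 3) q = (1 + q) / 3"
  by (simp add: bsc_out_def field_simps)

lemma MI_bsc_eq_KL_bern:
  "MI_bsc s q = s * KL_bern (1 - q) (bsc_out s q) + (1 - s) * KL_bern q (bsc_out s q)"
proof -
  have "s * q + (1 - s) * (1 - q) = 1 - bsc_out s q"
    by (simp add: bsc_out_def algebra_simps)
  then show ?thesis
    by (simp add: MI_bsc_def KL_bern_def UNIV_bool bsc_out_def algebra_simps)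
qed

lemma mult_ln_div_ge_diff:
  fixes a b :: real
  assumes "0 < a" "0 < b"
  shows "a - b \<le> a * ln (a / b)"
proof -
  have "ln (b / a) \<le> b / a - 1"
    using assms by (intro ln_le_minus_one) simp
  then have "a * ln (b / a) \<le> b - a"
    using assms by (simp add: field_simps mult_left_mono)
  then show ?thesis
    using assms by (simp add: ln_div algebra_simps)
qed

lemma KL_bern_nonneg:
  assumes "0 < a" "a < 1" "0 < b" "b < 1"
  shows "0 \<le> KL_bern a b"
  using mult_ln_div_ge_diff[of a b] mult_ln_div_ge_diff[of "1 - a" "1 - b"] assms
  by (simp add: KL_bern_def)

lemma binary_entropy_one_minus: "binary_entropy (1 - x) = binary_entropy x"
  by (simp add: binary_entropy_def algebra_simps)

lemma KL_bern_eq_cross_entropy: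
  assumes "0 < a" "a < 1" "0 < b" "b < 1"
  shows "KL_bern a b = - binary_entropy a - a * ln b - (1 - a) * ln (1 - b)"
  using assms by (simp add: KL_bern_def binary_entropy_def ln_div algebra_simps)

lemma binary_entropy_le_tangent:
  assumes "0 < w" "w < 1" "0 < u" "u < 1"
  shows "binary_entropy w \<le> binary_entropy u + (ln (1 - u) - ln u) * (w - u)"
proof -
  have "binary_entropy u + (ln (1 - u) - ln u) * (w - u) - binary_entropy w = KL_bern w u"
    using assms by (simp add: KL_bern_eq_cross_entropy binary_entropy_def algebra_simps)
  then show ?thesis
    using KL_bern_nonneg[OF assms] by linarith
qed

lemma has_real_derivative_binary_entropy:
  assumes "0 < x" "x < 1"
  shows "(binary_entropy has_real_derivative ln (1 - x) - ln x) (at x)"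
  unfolding binary_entropy_def[abs_def] using assms
  by (auto intro!: derivative_eq_intros)

lemma binary_entropy_ge_of_between:
  assumes "0 < a" "a \<le> w" "w \<le> 1 - a"
  shows "binary_entropy a \<le> binary_entropy w"
proof -
  have w: "0 < w" "w < 1" and "a < 1"
    using assms by auto
  show ?thesis
  proof (cases "w \<le> 1 / 2")
    case True
    then have "0 \<le> ln (1 - w) - ln w"
      using w by simp
    then have "(ln (1 - w) - ln w) * (a - w) \<le> 0"
      using assms by (simp add: mult_nonneg_nonpos)
    then show ?thesis
      using binary_entropy_le_tangent[of a w] assms w by linarith
  next
    case False
    then have "ln (1 - w) - ln w \<le> 0"
      using w by simp
    then have "(ln (1 - w) - ln w) * ((1 - a) - w) \<le> 0"
      using assms by (simp add: mult_nonpos_nonneg)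
    then show ?thesis
      using binary_entropy_le_tangent[of "1 - a" w] binary_entropy_one_minus[of a] assms w
      by linarith
  qed
qed

lemma KL_bern_mono_left:
  assumes "0 < b" "b \<le> a" "a \<le> w" "w < 1"
  shows "KL_bern a b \<le> KL_bern w b"
proof -
  have "ln (1 - a) - ln a \<le> ln (1 - b) - ln b"
    using assms by (auto intro: diff_mono)
  then have "(ln (1 - a) - ln a) * (w - a) \<le> (ln (1 - b) - ln b) * (w - a)"
    using assms by (intro mult_right_mono) auto
  then show ?thesis
    using binary_entropy_le_tangent[of w a] assms
    by (simp add: KL_bern_eq_cross_entropy algebra_simps)
qed

lemma MI_bsc_eq_entropy_diff:
  assumes "0 \<le> s" "s \<le> 1" "0 < q" "q < 1"
  shows "MI_bsc s q = binary_entropy (bsc_out s q) - binary_entropy q"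
proof -
  define u where "u = bsc_out s q"
  have u: "0 < u" "u < 1"
    using bsc_out_bounds assms by (auto simp: u_def)
  have "MI_bsc s q = - binary_entropy q - (s * (1 - q) + (1 - s) * q) * ln u
      - (s * q + (1 - s) * (1 - q)) * ln (1 - u)"
    using assms u binary_entropy_one_minus[of q]
    by (simp add: MI_bsc_eq_KL_bern KL_bern_eq_cross_entropy flip: u_def) (simp add: algebra_simps)
  also have "\<dots> = binary_entropy u - binary_entropy q"
    by (simp add: u_def bsc_out_def binary_entropy_def algebra_simps)
  finally show ?thesis
    by (simp add: u_def)
qed

lemma has_real_derivative_binary_entropy_third:
  assumes "0 < x" "x < 1"
  defines "a \<equiv> (1 + x) / 3"
  shows "((\<lambda>x. binary_entropy ((1 + x) / 3)) has_real_derivative (ln (1 - a) - ln a) / 3) (at x)"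
proof -
  have "((\<lambda>x. (1 + x) / 3) has_real_derivative 1 / 3) (at x)"
    by (auto intro!: derivative_eq_intros)
  moreover have "(binary_entropy has_real_derivative ln (1 - a) - ln a) (at ((1 + x) / 3))"
    unfolding a_def using assms by (intro has_real_derivative_binary_entropy) auto
  ultimately show ?thesis
    using DERIV_chain2 by fastforce
qed

lemma MI_bsc_third_antimono:
  assumes "0 < q" "q \<le> p0" "p0 < 1 / 2"
  shows "MI_bsc (1 / 3) p0 \<le> MI_bsc (1 / 3) q"
proof -
  define f where "f x = binary_entropy ((1 + x) / 3) - binary_entropy x" for x
  have "f p0 \<le> f q"
  proof (rule DERIV_nonpos_imp_nonincreasing[OF assms(2)])
    fix x assume x: "q \<le> x" "x \<le> p0"
    define a where "a = (1 + x) / 3"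
    have x_a: "0 < x" "x < a" "a \<le> 1 / 2"
      using x assms by (auto simp: a_def)
    have "(f has_real_derivative (ln (1 - a) - ln a) / 3 - (ln (1 - x) - ln x)) (at x)"
      unfolding f_def a_def using x_a
      by (intro DERIV_diff has_real_derivative_binary_entropy_third has_real_derivative_binary_entropy)
        auto
    moreover have "0 \<le> ln (1 - a) - ln a" "ln (1 - a) - ln a \<le> ln (1 - x) - ln x"
      using x_a by (auto intro: diff_mono)
    ultimately show "\<exists>D. (f has_real_derivative D) (at x) \<and> D \<le> 0"
      by (intro exI[of _ "(ln (1 - a) - ln a) / 3 - (ln (1 - x) - ln x)"]) auto
  qed
  then show ?thesis
    using assms by (simp add: f_def MI_bsc_eq_entropy_diff bsc_out_third)
qed

lemma KL_bern_third_antimono: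
  assumes "0 < q" "q \<le> p0" "p0 < 1 / 2"
  shows "KL_bern (bsc_out (1 / 3) p0) p0 \<le> KL_bern (bsc_out (1 / 3) q) q"
proof -
  define k where
    "k x = - binary_entropy ((1 + x) / 3) - (1 + x) / 3 * ln x - (1 - (1 + x) / 3) * ln (1 - x)" for x
  have "k p0 \<le> k q"
  proof (rule DERIV_nonpos_imp_nonincreasing[OF assms(2)])
    fix x assume x: "q \<le> x" "x \<le> p0"
    define a where "a = (1 + x) / 3"
    have x_a: "0 < x" "x < a" "a < 1" "x < 1"
      using x assms by (auto simp: a_def)
    define D where "D = - (ln (1 - a) - ln a) / 3 - (ln x / 3 + a / x) + (ln (1 - x) / 3 + (1 - a) / (1 - x))"
    have "(k has_real_derivative D) (at x)"
      unfolding k_def D_def a_def using x_a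
      by (auto intro!: derivative_eq_intros has_real_derivative_binary_entropy_third)
        (simp add: field_simps)
    moreover have "D \<le> 0"
    proof -
      define r where "r = a * (1 - x) / (x * (1 - a))"
      have "ln r \<le> r - 1"
        using x_a by (intro ln_le_minus_one) (simp add: r_def)
      moreover have "ln r = ln a + ln (1 - x) - ln x - ln (1 - a)"
        using x_a by (simp add: r_def ln_div ln_mult)
      moreover have "r - 1 = (a - x) / (x * (1 - a))"
        using x_a by (simp add: r_def field_simps)
      ultimately have "ln a + ln (1 - x) - ln x - ln (1 - a) \<le> (a - x) / (x * (1 - a))"
        by simp
      then have "(ln a + ln (1 - x) - ln x - ln (1 - a)) / 3 \<le> (a - x) / (x * (1 - a)) / 3"
        by (rule divide_right_mono) simp
      moreover have "a / x - (1 - a) / (1 - x) = (a - x) / (x * (1 - x))"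
        using x_a by (simp add: field_simps)
      moreover have "(a - x) / (x * (1 - a)) / 3 \<le> (a - x) / (x * (1 - x))"
      proof -
        have "x * (1 - x) \<le> 3 * (x * (1 - a))"
          using x_a by (simp add: a_def field_simps)
        then show ?thesis
          using x_a by (simp add: divide_left_mono)
      qed
      moreover have "D = (ln a + ln (1 - x) - ln x - ln (1 - a)) / 3 - (a / x - (1 - a) / (1 - x))"
        by (simp add: D_def diff_divide_distrib add_divide_distrib)
      ultimately show ?thesis
        by linarith
    qed
    ultimately show "\<exists>D. (k has_real_derivative D) (at x) \<and> D \<le> 0"
      by blast
  qed
  moreover have "KL_bern (bsc_out (1 / 3) x) x = k x" if "0 < x" "x < 1 / 2" for x
    using that by (simp add: bsc_out_third k_def KL_bern_eq_cross_entropy)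
  ultimately show ?thesis
    using assms by simp
qed

lemma K_h_le_MI_bsc:
  assumes "1 / 3 \<le> s" "s \<le> 2 / 3" "0 < q" "q \<le> p (1 / 2)" "p (1 / 2) < 1 / 2"
  shows "K_h p \<le> MI_bsc s q"
proof -
  have "bsc_out (2 / 3) q = 1 - bsc_out (1 / 3) q"
    by (simp add: bsc_out_def field_simps)
  then have "bsc_out (1 / 3) q \<le> bsc_out s q" "bsc_out s q \<le> 1 - bsc_out (1 / 3) q"
    using bsc_out_mono[of "1 / 3" s q] bsc_out_mono[of s "2 / 3" q] assms by auto
  moreover have "0 < bsc_out (1 / 3) q"
    using assms by (intro bsc_out_bounds) auto
  ultimately have "binary_entropy (bsc_out (1 / 3) q) \<le> binary_entropy (bsc_out s q)"
    using binary_entropy_ge_of_between by blast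
  then have "MI_bsc (1 / 3) q \<le> MI_bsc s q"
    using assms by (simp add: MI_bsc_eq_entropy_diff)
  then show ?thesis
    using MI_bsc_third_antimono[OF assms(3-5)] by (simp add: K_h_def)
qed

lemma K_h_le_KL_bern:
  assumes "1 / 3 \<le> s" "s \<le> 1" "0 < q" "q \<le> p (1 / 2)" "p (1 / 2) < 1 / 2"
  shows "K_h p \<le> KL_bern (bsc_out s q) q"
proof -
  have "0 \<le> KL_bern (bsc_out (1 / 3) (p (1 / 2))) (p (1 / 2))"
    using bsc_out_bounds[of "1 / 3" "p (1 / 2)"] assms by (intro KL_bern_nonneg) auto
  then have "K_h p \<le> KL_bern (bsc_out (1 / 3) (p (1 / 2))) (p (1 / 2))"
    by (simp add: K_h_def bsc_out_def)
  also have "\<dots> \<le> KL_bern (bsc_out (1 / 3) q) q"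
    using KL_bern_third_antimono[OF assms(3-5)] .
  also have "\<dots> \<le> KL_bern (bsc_out s q) q"
  proof (rule KL_bern_mono_left)
    show "q \<le> bsc_out (1 / 3) q" "bsc_out (1 / 3) q \<le> bsc_out s q" "bsc_out s q < 1"
      using bsc_out_mono[of 0 "1 / 3" q] bsc_out_mono[of "1 / 3" s q] bsc_out_bounds[of s q] assms
      by (auto simp: bsc_out_def)
  qed (use assms in simp)
  finally show ?thesis .
qed

section \<open>Drift of the log-odds potential under a binary observation\<close>

definition xlogit :: "real \<Rightarrow> real" where
  "xlogit x = x * ln (x / (1 - x))"

lemma sum_ge_of_supporting_line:
  fixes P w :: "'a \<Rightarrow> real"
  assumes "finite Y" "\<And>y. y \<in> Y \<Longrightarrow> 0 \<le> P y" "sum P Y = 1" "(\<Sum>y\<in>Y. P y * w y) = x"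
    and "\<And>y. y \<in> Y \<Longrightarrow> f x + d * (w y - x) \<le> f (w y)"
  shows "f x \<le> (\<Sum>y\<in>Y. P y * f (w y))"
proof -
  have "(\<Sum>y\<in>Y. P y * (f x + d * (w y - x))) \<le> (\<Sum>y\<in>Y. P y * f (w y))"
    using assms by (intro sum_mono mult_left_mono) auto
  moreover have "(\<Sum>y\<in>Y. P y * (f x + d * (w y - x))) = f x"
    using assms(3,4)
    by (simp add: algebra_simps sum.distrib sum_subtractf sum_distrib_left[symmetric]
        sum_distrib_right[symmetric])
  ultimately show ?thesis by simp
qed

lemma xlnx_supporting_line:
  fixes w x :: real
  assumes "0 < w" "0 < x"
  shows "x * ln x + (1 + ln x) * (w - x) \<le> w * ln w"
  using mult_ln_div_ge_diff[OF assms] assms by (simp add: ln_div algebra_simps)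

lemma neg_x_ln_one_minus_supporting_line:
  fixes w x :: real
  assumes "0 \<le> w" "w < 1" "x < 1"
  shows "- x * ln (1 - x) + (x / (1 - x) - ln (1 - x)) * (w - x) \<le> - w * ln (1 - w)"
proof -
  define t where "t = (w - x) / (1 - x)"
  have "ln ((1 - w) / (1 - x)) \<le> (1 - w) / (1 - x) - 1"
    using assms by (intro ln_le_minus_one) simp
  then have "t \<le> ln (1 - x) - ln (1 - w)"
    using assms by (simp add: t_def ln_div field_simps)
  then have "w * t \<le> w * ln (1 - x) - w * ln (1 - w)"
    using assms by (simp add: right_diff_distrib[symmetric] mult_left_mono)
  moreover have "0 \<le> (w - x) * t"
    using assms by (auto simp: t_def zero_le_mult_iff zero_le_divide_iff)
  moreover have "(x / (1 - x) - ln (1 - x)) * (w - x) = x * t - ln (1 - x) * w + ln (1 - x) * x"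
    by (simp add: t_def algebra_simps)
  ultimately show ?thesis
    by (simp add: algebra_simps)
qed

text \<open>A bin inside or outside the query has posterior mass w y, where bern a is its
  observation law and bern u the marginal law of the observation.\<close>

lemma xlogit_drift_scaled:
  fixes a u x :: real
  defines "w \<equiv> \<lambda>y. bern a y * x / bern u y"
  assumes "0 < a" "a < 1" "0 < u" "u < 1" "0 < x" "x < 1" "\<And>y. w y < 1"
  shows "x * KL_bern a u \<le> (\<Sum>y\<in>UNIV. bern u y * xlogit (w y)) - xlogit x"
proof -
  define g :: "real \<Rightarrow> real" where "g w = - w * ln (1 - w)" for w
  have w_pos: "0 < w y" for y
    using assms by (simp add: w_def bern_pos)
  have mass_w: "bern u y * w y = bern a y * x" for y
    using bern_pos[of u y] assms(4,5) by (simp add: w_def)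
  have split: "bern u y * xlogit (w y)
      = x * (bern a y * ln (bern a y / bern u y)) + bern a y * (x * ln x) + bern u y * g (w y)" for y
  proof -
    have "bern u y * xlogit (w y) = (bern u y * w y) * ln (w y) + bern u y * g (w y)"
      using w_pos[of y] assms(8) by (simp add: xlogit_def g_def ln_div algebra_simps)
    moreover note mass_w[of y]
    moreover have "ln (w y) = ln (bern a y / bern u y) + ln x"
      using bern_pos[of a y] bern_pos[of u y] assms(2-6) by (simp add: w_def ln_div ln_mult)
    ultimately show ?thesis by (simp add: algebra_simps)
  qed
  have "g x \<le> (\<Sum>y\<in>UNIV. bern u y * g (w y))"
  proof (rule sum_ge_of_supporting_line[where P = "bern u" and f = g and w = w])
    show "(\<Sum>y\<in>UNIV. bern u y * w y) = x"
      by (simp add: mass_w sum_bern sum_distrib_right[symmetric])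
    show "g x + (x / (1 - x) - ln (1 - x)) * (w y - x) \<le> g (w y)" for y
      unfolding g_def using assms(7,8) w_pos[of y] by (intro neg_x_ln_one_minus_supporting_line) auto
  qed (use sum_bern[of u] assms(4,5) in \<open>auto simp: bern_def\<close>)
  moreover have "(\<Sum>y\<in>UNIV. bern u y * xlogit (w y))
      = x * KL_bern a u + x * ln x + (\<Sum>y\<in>UNIV. bern u y * g (w y))"
    by (simp add: split sum.distrib KL_bern_eq_sum sum_distrib_left[symmetric]
        sum_distrib_right[symmetric] sum_bern)
  moreover have "xlogit x = x * ln x + g x"
    using assms(6,7) by (simp add: xlogit_def g_def ln_div algebra_simps)
  ultimately show ?thesis by simp
qed

text \<open>A bin containing the query: now the complement mass 1 - x is rescaled.\<close>

lemma xlogit_drift_complement: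
  fixes q u z :: real
  defines "v \<equiv> \<lambda>y. bern q y * z / bern u y"
  assumes "0 < q" "q < 1" "0 < u" "u < 1" "0 < z" "z < 1" "\<And>y. v y < 1"
  shows "KL_bern u q + z * KL_bern q u \<le> (\<Sum>y\<in>UNIV. bern u y * xlogit (1 - v y)) - xlogit (1 - z)"
proof -
  define h :: "real \<Rightarrow> real" where "h w = w * ln w" for w
  have v_pos: "0 < v y" for y
    using assms by (simp add: v_def bern_pos)
  have mass_v: "bern u y * v y = bern q y * z" for y
    using bern_pos[of u y] assms(4,5) by (simp add: v_def)
  have split: "bern u y * xlogit (1 - v y) = bern u y * h (1 - v y)
      + bern u y * ln (bern u y / bern q y) + z * (bern q y * ln (bern q y / bern u y))
      - bern u y * ln z + bern q y * (z * ln z)" for y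
  proof -
    have "bern u y * xlogit (1 - v y) = bern u y * h (1 - v y) - (bern u y - bern u y * v y) * ln (v y)"
      using v_pos[of y] assms(8) by (simp add: xlogit_def h_def ln_div algebra_simps)
    then have "bern u y * xlogit (1 - v y) = bern u y * h (1 - v y) - (bern u y - bern q y * z) * ln (v y)"
      by (simp only: mass_v)
    moreover have "ln (v y) = ln (bern q y / bern u y) + ln z"
      using bern_pos[of q y] bern_pos[of u y] assms(2-6) by (simp add: v_def ln_div ln_mult)
    moreover have "ln (bern u y / bern q y) = - ln (bern q y / bern u y)"
      using bern_pos[of q y] bern_pos[of u y] assms(2-5) by (simp add: ln_div)
    ultimately show ?thesis by (simp add: algebra_simps)
  qed
  have "h (1 - z) \<le> (\<Sum>y\<in>UNIV. bern u y * h (1 - v y))"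
  proof (rule sum_ge_of_supporting_line[where P = "bern u" and f = h and w = "\<lambda>y. 1 - v y"])
    show "(\<Sum>y\<in>UNIV. bern u y * (1 - v y)) = 1 - z"
      by (simp add: right_diff_distrib mass_v sum_subtractf sum_bern sum_distrib_right[symmetric])
    show "h (1 - z) + (1 + ln (1 - z)) * ((1 - v y) - (1 - z)) \<le> h (1 - v y)" for y
      unfolding h_def using assms(7,8) by (intro xlnx_supporting_line) auto
  qed (use sum_bern[of u] assms(4,5) in \<open>auto simp: bern_def\<close>)
  moreover have "(\<Sum>y\<in>UNIV. bern u y * xlogit (1 - v y))
      = (\<Sum>y\<in>UNIV. bern u y * h (1 - v y)) + KL_bern u q + z * KL_bern q u - ln z + z * ln z"
    by (simp add: split sum.distrib sum_subtractf KL_bern_eq_sum sum_distrib_left[symmetric]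
        sum_distrib_right[symmetric] sum_bern)
  moreover have "xlogit (1 - z) = h (1 - z) - ln z + z * ln z"
    using assms(6,7) by (simp add: xlogit_def h_def ln_div algebra_simps)
  ultimately show ?thesis by simp
qed

section \<open>Hierarchical sets\<close>

lemma finite_Hset [simp]: "finite (Hset L l m)"
  by (simp add: Hset_def)

lemma finite_cells [simp]: "finite (cells L)"
  by (simp add: cells_def)

lemma card_Hset: "card (Hset L l m) = 2 ^ (L - l)"
  by (simp add: Hset_def algebra_simps)

lemma Hset_ne_empty: "Hset L l m \<noteq> {}"
  by (simp add: Hset_def)

lemma mem_Hset_iff: "i \<in> Hset L l m \<longleftrightarrow> 1 \<le> i \<and> (i - 1) div 2 ^ (L - l) = m"
proof -
  define d :: nat where "d = 2 ^ (L - l)"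
  have "0 < d"
    by (simp add: d_def)
  have "i \<in> Hset L l m \<longleftrightarrow> 1 \<le> i \<and> m * d \<le> i - 1 \<and> i - 1 < Suc m * d"
    by (auto simp: Hset_def d_def)
  also have "\<dots> \<longleftrightarrow> 1 \<le> i \<and> m \<le> (i - 1) div d \<and> (i - 1) div d < Suc m"
    using \<open>0 < d\<close> by (simp add: less_eq_div_iff_mult_less_eq div_less_iff_less_mult)
  finally show ?thesis
    by (auto simp: d_def)
qed

lemma mem_Hset_coarser:
  assumes "l \<le> l'" "l' \<le> L" "i \<in> Hset L l' m'"
  shows "i \<in> Hset L l m \<longleftrightarrow> m = m' div 2 ^ (l' - l)"
proof -
  have "(2::nat) ^ (L - l) = 2 ^ (L - l') * 2 ^ (l' - l)"
    using assms by (simp add: power_add[symmetric])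
  then have "(i - 1) div 2 ^ (L - l) = (i - 1) div 2 ^ (L - l') div 2 ^ (l' - l)"
    by (simp add: div_mult2_eq)
  then show ?thesis
    using assms(3) unfolding mem_Hset_iff by auto
qed

lemma Hset_subset_Hset_div:
  "l \<le> l' \<Longrightarrow> l' \<le> L \<Longrightarrow> Hset L l' m' \<subseteq> Hset L l (m' div 2 ^ (l' - l))"
  using mem_Hset_coarser by blast

lemma Hset_disjoint:
  "l \<le> l' \<Longrightarrow> l' \<le> L \<Longrightarrow> m \<noteq> m' div 2 ^ (l' - l) \<Longrightarrow> Hset L l m \<inter> Hset L l' m' = {}"
  using mem_Hset_coarser by blast

lemma Hset_subset_cells:
  assumes "l \<le> L" "m < 2 ^ l"
  shows "Hset L l m \<subseteq> cells L"
proof -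
  have "Hset L 0 0 = cells L"
    by (simp add: Hset_def cells_def)
  then show ?thesis
    using Hset_subset_Hset_div[of 0 l L m] assms by simp
qed

lemma cells_diff_Hset_ne_empty:
  assumes "1 \<le> l" "l \<le> L"
  shows "cells L - Hset L l m \<noteq> {}"
proof (cases "m = 0")
  case True
  have "(2::nat) ^ (L - l) < 2 ^ L"
    using assms by (intro power_strict_increasing) auto
  then have "2 ^ L \<in> cells L - Hset L l m"
    using True by (auto simp: Hset_def cells_def)
  then show ?thesis by blast
next
  case False
  then have "1 \<in> cells L - Hset L l m"
    by (auto simp: Hset_def cells_def)
  then show ?thesis by blast
qed

lemma mass_cells_eq_sum_Hset:
  assumes "l \<le> L"
  shows "mass f (cells L) = (\<Sum>m<2 ^ l. mass f (Hset L l m))"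
proof -
  define g where "g i = (i - 1) div 2 ^ (L - l)" for i :: nat
  have "g ` cells L \<subseteq> {..<2 ^ l}"
  proof
    fix m assume "m \<in> g ` cells L"
    then obtain i where i: "i \<in> cells L" "m = g i" by auto
    have "i - 1 < 2 ^ l * 2 ^ (L - l)"
      using i assms by (auto simp: cells_def simp flip: power_add)
    then show "m \<in> {..<2 ^ l}"
      using i by (simp add: g_def less_mult_imp_div_less)
  qed
  then have "mass f (cells L) = (\<Sum>m<2 ^ l. sum f {i \<in> cells L. g i = m})"
    unfolding mass_def by (intro sum.group[symmetric]) auto
  also have "\<dots> = (\<Sum>m<2 ^ l. mass f (Hset L l m))"
  proof (rule sum.cong)
    fix m :: nat assume "m \<in> {..<2 ^ l}"
    have "{i \<in> cells L. g i = m} = cells L \<inter> Hset L l m"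
      by (auto simp: g_def mem_Hset_iff cells_def)
    also have "\<dots> = Hset L l m"
      using Hset_subset_cells[OF assms] \<open>m \<in> {..<2 ^ l}\<close> by blast
    finally show "sum f {i \<in> cells L. g i = m} = mass f (Hset L l m)"
      by (simp add: mass_def)
  qed simp
  finally show ?thesis .
qed

lemma mass_Hset_children:
  assumes "l < L"
  shows "mass f (Hset L l m) = mass f (Hset L (l + 1) (2 * m)) + mass f (Hset L (l + 1) (2 * m + 1))"
proof -
  have "(2::nat) ^ (L - l) = 2 ^ (L - (l + 1)) * 2"
    using assms by (simp flip: power_Suc2 add: Suc_diff_Suc)
  moreover have "k div 2 = m \<longleftrightarrow> k = 2 * m \<or> k = 2 * m + 1" for k :: nat
    by presburger
  ultimately have "Hset L l m = Hset L (l + 1) (2 * m) \<union> Hset L (l + 1) (2 * m + 1)"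
    by (auto simp: mem_Hset_iff div_mult2_eq)
  moreover have "Hset L (l + 1) (2 * m) \<inter> Hset L (l + 1) (2 * m + 1) = {}"
    by (auto simp: mem_Hset_iff)
  ultimately show ?thesis
    by (simp add: mass_def sum.union_disjoint)
qed

section \<open>One Bayesian update\<close>

definition positive_pmf :: "nat \<Rightarrow> (nat \<Rightarrow> real) \<Rightarrow> bool" where
  "positive_pmf L \<pi> \<longleftrightarrow> (\<forall>i\<in>cells L. 0 < \<pi> i) \<and> mass \<pi> (cells L) = 1"

lemma mass_empty [simp]: "mass \<pi> {} = 0"
  by (simp add: mass_def)

lemma mass_nonneg: "positive_pmf L \<pi> \<Longrightarrow> B \<subseteq> cells L \<Longrightarrow> 0 \<le> mass \<pi> B"
  unfolding mass_def positive_pmf_def by (intro sum_nonneg) (auto intro: less_imp_le)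

lemma mass_cells_diff:
  "positive_pmf L \<pi> \<Longrightarrow> B \<subseteq> cells L \<Longrightarrow> mass \<pi> (cells L - B) = 1 - mass \<pi> B"
  unfolding mass_def positive_pmf_def by (simp add: sum_diff)

lemma mass_pos:
  assumes "positive_pmf L \<pi>" "B \<subseteq> cells L" "B \<noteq> {}"
  shows "0 < mass \<pi> B"
  using assms unfolding mass_def positive_pmf_def
  by (intro sum_pos) (auto intro: finite_subset)

lemma mass_less_one:
  assumes "positive_pmf L \<pi>" "B \<subseteq> cells L" "cells L - B \<noteq> {}"
  shows "mass \<pi> B < 1"
  using mass_pos[OF assms(1) _ assms(3)] mass_cells_diff[OF assms(1,2)] by simp

lemma mass_le_one: "positive_pmf L \<pi> \<Longrightarrow> B \<subseteq> cells L \<Longrightarrow> mass \<pi> B \<le> 1"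
  using mass_nonneg[of L \<pi> "cells L - B"] mass_cells_diff[of L \<pi> B] by simp

definition query_noise :: "nat \<Rightarrow> (real \<Rightarrow> real) \<Rightarrow> nat set \<Rightarrow> real" where
  "query_noise L p S = p (real (card S) / 2 ^ L)"

lemma query_noise_Hset:
  assumes "l \<le> L"
  shows "query_noise L p (Hset L l m) = p (1 / 2 ^ l)"
proof -
  have "(2::real) ^ L = 2 ^ (L - l) * 2 ^ l"
    using assms by (simp flip: power_add)
  then show ?thesis
    by (simp add: query_noise_def card_Hset)
qed

lemma lik_eq_bern:
  "lik L p S y i = (if i \<in> S then bern (1 - query_noise L p S) y else bern (query_noise L p S) y)"
  by (auto simp: lik_def bern_def query_noise_def Let_def)

lemma mass_times_lik:
  assumes "finite A"
  shows "mass (\<lambda>i. \<pi> i * lik L p S y i) A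
    = bern (1 - query_noise L p S) y * mass \<pi> (A \<inter> S) + bern (query_noise L p S) y * mass \<pi> (A - S)"
proof -
  have "mass (\<lambda>i. \<pi> i * lik L p S y i) A
      = mass (\<lambda>i. \<pi> i * lik L p S y i) (A \<inter> S) + mass (\<lambda>i. \<pi> i * lik L p S y i) (A - S)"
    unfolding mass_def using assms by (rule sum.Int_Diff)
  then show ?thesis
    by (simp add: mass_def lik_eq_bern sum_distrib_right mult.commute)
qed

definition bin_drift :: "nat \<Rightarrow> (real \<Rightarrow> real) \<Rightarrow> (nat \<Rightarrow> real) \<Rightarrow> nat set \<Rightarrow> nat set \<Rightarrow> real" where
  "bin_drift L p \<pi> S B =
     (\<Sum>y\<in>UNIV. prob_obs L p \<pi> S y * xlogit (mass (post L p \<pi> S y) B)) - xlogit (mass \<pi> B)"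

lemma Unest_eq_sum_xlogit: "Unest L l \<pi> = (\<Sum>m<2 ^ l. xlogit (mass \<pi> (Hset L l m)))"
  using sum.atLeast1_atMost_eq[of "\<lambda>q. xlogit (mass \<pi> (Hset L l (q - 1)))" "2 ^ l"]
  by (simp add: Unest_def xlogit_def)

lemma Unest_drift_eq_sum_bin_drift:
  "(\<Sum>y\<in>UNIV. prob_obs L p \<pi> S y * Unest L l (post L p \<pi> S y)) - Unest L l \<pi>
    = (\<Sum>m<2 ^ l. bin_drift L p \<pi> S (Hset L l m))"
  by (simp add: Unest_eq_sum_xlogit bin_drift_def sum_distrib_left sum_subtractf
      sum.swap[of _ UNIV])

locale noisy_query =
  fixes L :: nat and p :: "real \<Rightarrow> real" and \<pi> :: "nat \<Rightarrow> real" and S :: "nat set"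
  assumes positive_pmf: "positive_pmf L \<pi>"
    and query_subset_cells: "S \<subseteq> cells L"
    and noise_pos: "0 < query_noise L p S"
    and noise_less_one: "query_noise L p S < 1"
begin

abbreviation noise :: real where
  "noise \<equiv> query_noise L p S"

abbreviation yes_prob :: real where
  "yes_prob \<equiv> bsc_out (mass \<pi> S) noise"

lemma yes_prob_bounds: "0 < yes_prob" "yes_prob < 1"
  using bsc_out_bounds mass_nonneg[OF positive_pmf query_subset_cells]
    mass_le_one[OF positive_pmf query_subset_cells] noise_pos noise_less_one
  by auto

lemma prob_obs_eq_bern: "prob_obs L p \<pi> S y = bern yes_prob y"
proof -
  have "prob_obs L p \<pi> S y = mass (\<lambda>i. \<pi> i * lik L p S y i) (cells L)"
    by (simp add: prob_obs_def mass_def)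
  also have "\<dots> = bern yes_prob y"
    using query_subset_cells
    by (simp add: mass_times_lik Int_absorb1 mass_cells_diff[OF positive_pmf] bern_bsc_out)
  finally show ?thesis .
qed

lemma mass_post:
  assumes "finite A"
  shows "mass (post L p \<pi> S y) A
    = (bern (1 - noise) y * mass \<pi> (A \<inter> S) + bern noise y * mass \<pi> (A - S)) / bern yes_prob y"
proof -
  have "mass (post L p \<pi> S y) A = mass (\<lambda>i. \<pi> i * lik L p S y i) A / prob_obs L p \<pi> S y"
    by (simp add: post_def mass_def sum_divide_distrib)
  then show ?thesis
    by (simp add: mass_times_lik[OF assms] prob_obs_eq_bern)
qed

lemma positive_pmf_post: "positive_pmf L (post L p \<pi> S y)"
  unfolding positive_pmf_def
proof
  show "\<forall>i\<in>cells L. 0 < post L p \<pi> S y i"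
    using positive_pmf noise_pos noise_less_one yes_prob_bounds
    by (auto simp: positive_pmf_def post_def prob_obs_eq_bern lik_eq_bern bern_pos)
  show "mass (post L p \<pi> S y) (cells L) = 1"
    using query_subset_cells bern_pos[OF yes_prob_bounds, of y, THEN order_less_imp_not_eq2]
    by (simp add: mass_post Int_absorb1 mass_cells_diff[OF positive_pmf] bern_bsc_out)
qed

lemma post_mass_bounds:
  assumes "B \<subseteq> cells L" "B \<noteq> {}" "cells L - B \<noteq> {}"
  shows "0 < mass (post L p \<pi> S y) B" "mass (post L p \<pi> S y) B < 1"
  using mass_pos[OF positive_pmf_post assms(1,2)] mass_less_one[OF positive_pmf_post assms(1,3)]
  by auto

lemma bin_drift_inside:
  assumes "B \<subseteq> S" "B \<noteq> {}" "cells L - B \<noteq> {}"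
  shows "mass \<pi> B * KL_bern (1 - noise) yes_prob \<le> bin_drift L p \<pi> S B"
proof -
  have B: "B \<subseteq> cells L"
    using assms(1) query_subset_cells by blast
  have post: "mass (post L p \<pi> S y) B = bern (1 - noise) y * mass \<pi> B / bern yes_prob y" for y
  proof -
    have "B \<inter> S = B" "B - S = {}"
      using assms(1) by blast+
    then show ?thesis
      by (simp only: mass_post[OF finite_subset[OF B finite_cells]]) simp
  qed
  show ?thesis
    unfolding bin_drift_def prob_obs_eq_bern post
    using post_mass_bounds[OF B assms(2,3)] mass_pos[OF positive_pmf B assms(2)]
      mass_less_one[OF positive_pmf B assms(3)] noise_pos noise_less_one yes_prob_bounds
    by (intro xlogit_drift_scaled) (auto simp: post)
qed

lemma bin_drift_outside:
  assumes "B \<subseteq> cells L" "B \<inter> S = {}" "B \<noteq> {}" "cells L - B \<noteq> {}"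
  shows "mass \<pi> B * KL_bern noise yes_prob \<le> bin_drift L p \<pi> S B"
proof -
  have post: "mass (post L p \<pi> S y) B = bern noise y * mass \<pi> B / bern yes_prob y" for y
    using assms(2) by (simp add: mass_post[OF finite_subset[OF assms(1) finite_cells]] Diff_triv)
  show ?thesis
    unfolding bin_drift_def prob_obs_eq_bern post
    using post_mass_bounds[OF assms(1,3,4)] mass_pos[OF positive_pmf assms(1,3)]
      mass_less_one[OF positive_pmf assms(1,4)] noise_pos noise_less_one yes_prob_bounds
    by (intro xlogit_drift_scaled) (auto simp: post)
qed

lemma bin_drift_containing:
  assumes "S \<subseteq> B" "B \<subseteq> cells L" "B \<noteq> {}" "cells L - B \<noteq> {}"
  shows "KL_bern yes_prob noise \<le> bin_drift L p \<pi> S B"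
proof -
  have post: "mass (post L p \<pi> S y) B = 1 - bern noise y * (1 - mass \<pi> B) / bern yes_prob y" for y
  proof -
    have diff: "mass \<pi> (B - S) = mass \<pi> B - mass \<pi> S"
      using assms(1,2) by (simp add: mass_def sum_diff finite_subset)
    show ?thesis
      using assms(1) bern_pos[OF yes_prob_bounds, of y]
      by (simp add: mass_post[OF finite_subset[OF assms(2) finite_cells]] diff Int_absorb1 bern_bsc_out field_simps)
  qed
  have "KL_bern yes_prob noise + (1 - mass \<pi> B) * KL_bern noise yes_prob
      \<le> (\<Sum>y\<in>UNIV. bern yes_prob y * xlogit (1 - bern noise y * (1 - mass \<pi> B) / bern yes_prob y))
        - xlogit (1 - (1 - mass \<pi> B))"
    using post_mass_bounds[OF assms(2-4)] mass_pos[OF positive_pmf assms(2,3)]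
      mass_less_one[OF positive_pmf assms(2,4)] noise_pos noise_less_one yes_prob_bounds
    by (intro xlogit_drift_complement) (auto simp: post)
  then have "KL_bern yes_prob noise + (1 - mass \<pi> B) * KL_bern noise yes_prob \<le> bin_drift L p \<pi> S B"
    by (simp add: bin_drift_def prob_obs_eq_bern post)
  moreover have "0 \<le> (1 - mass \<pi> B) * KL_bern noise yes_prob"
    using mass_less_one[OF positive_pmf assms(2,4)] noise_pos noise_less_one yes_prob_bounds
    by (simp add: KL_bern_nonneg)
  ultimately show ?thesis
    by linarith
qed

lemma Unest_drift_ge_MI_bsc:
  assumes "S = Hset L l' m'" "l' \<le> l" "1 \<le> l" "l \<le> L"
  shows "MI_bsc (mass \<pi> S) noise
    \<le> (\<Sum>y\<in>UNIV. prob_obs L p \<pi> S y * Unest L l (post L p \<pi> S y)) - Unest L l \<pi>"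
proof -
  define g where
    "g i = \<pi> i * (if i \<in> S then KL_bern (1 - noise) yes_prob else KL_bern noise yes_prob)" for i
  have "mass g (cells L) = mass g (cells L - S) + mass g S"
    using query_subset_cells by (simp add: mass_def sum.subset_diff)
  moreover have "mass g S = mass \<pi> S * KL_bern (1 - noise) yes_prob"
    by (simp add: mass_def g_def sum_distrib_right)
  moreover have "mass g (cells L - S) = mass \<pi> (cells L - S) * KL_bern noise yes_prob"
    by (simp add: mass_def g_def sum_distrib_right)
  ultimately have "MI_bsc (mass \<pi> S) noise = mass g (cells L)"
    by (simp add: MI_bsc_eq_KL_bern mass_cells_diff[OF positive_pmf query_subset_cells])
  also have "\<dots> = (\<Sum>m<2 ^ l. mass g (Hset L l m))"
    using assms(4) by (rule mass_cells_eq_sum_Hset)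
  also have "\<dots> \<le> (\<Sum>m<2 ^ l. bin_drift L p \<pi> S (Hset L l m))"
  proof (rule sum_mono)
    fix m :: nat assume "m \<in> {..<2 ^ l}"
    then have B: "Hset L l m \<subseteq> cells L" "Hset L l m \<noteq> {}" "cells L - Hset L l m \<noteq> {}"
      using Hset_subset_cells Hset_ne_empty cells_diff_Hset_ne_empty assms(3,4) by auto
    show "mass g (Hset L l m) \<le> bin_drift L p \<pi> S (Hset L l m)"
    proof (cases "m' = m div 2 ^ (l - l')")
      case True
      then have "Hset L l m \<subseteq> S"
        using Hset_subset_Hset_div[of l' l L m] assms by simp
      moreover from this have "mass g (Hset L l m) = mass \<pi> (Hset L l m) * KL_bern (1 - noise) yes_prob"
        by (auto simp: mass_def g_def sum_distrib_right intro!: sum.cong)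
      ultimately show ?thesis
        using bin_drift_inside[OF _ B(2,3)] by simp
    next
      case False
      then have "Hset L l m \<inter> S = {}"
        using Hset_disjoint[of l' l L m' m] assms by auto
      moreover from this have "mass g (Hset L l m) = mass \<pi> (Hset L l m) * KL_bern noise yes_prob"
        by (auto simp: mass_def g_def sum_distrib_right intro!: sum.cong)
      ultimately show ?thesis
        using bin_drift_outside[OF B(1) _ B(2,3)] by simp
    qed
  qed
  also have "\<dots> = (\<Sum>y\<in>UNIV. prob_obs L p \<pi> S y * Unest L l (post L p \<pi> S y)) - Unest L l \<pi>"
    by (rule Unest_drift_eq_sum_bin_drift[symmetric])
  finally show ?thesis .
qed

lemma Unest_drift_ge_KL_bern:
  assumes "S = Hset L l' m'" "m' < 2 ^ l'" "l < l'" "l' \<le> L" "1 \<le> l"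
  shows "KL_bern yes_prob noise
    \<le> (\<Sum>y\<in>UNIV. prob_obs L p \<pi> S y * Unest L l (post L p \<pi> S y)) - Unest L l \<pi>"
proof -
  define Q where "Q = m' div 2 ^ (l' - l)"
  have "(2::nat) ^ l' = 2 ^ l * 2 ^ (l' - l)"
    using assms(3) by (simp flip: power_add)
  then have "Q < 2 ^ l"
    using assms(2) by (simp add: Q_def less_mult_imp_div_less)
  have bins: "Hset L l m \<subseteq> cells L" "Hset L l m \<noteq> {}" "cells L - Hset L l m \<noteq> {}"
    if "m < 2 ^ l" for m
    using Hset_subset_cells Hset_ne_empty cells_diff_Hset_ne_empty assms that by auto
  have "KL_bern yes_prob noise \<le> bin_drift L p \<pi> S (Hset L l Q)"
    using Hset_subset_Hset_div[of l l' L m'] assms bins[OF \<open>Q < 2 ^ l\<close>]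
    by (intro bin_drift_containing) (auto simp: Q_def)
  also have "\<dots> \<le> (\<Sum>m<2 ^ l. bin_drift L p \<pi> S (Hset L l m))"
  proof (rule member_le_sum)
    fix m :: nat assume m: "m \<in> {..<2 ^ l} - {Q}"
    then have "Hset L l m \<inter> S = {}"
      using Hset_disjoint[of l l' L m m'] assms by (auto simp: Q_def)
    then have "mass \<pi> (Hset L l m) * KL_bern noise yes_prob \<le> bin_drift L p \<pi> S (Hset L l m)"
      using m bins by (intro bin_drift_outside) auto
    moreover have "0 \<le> mass \<pi> (Hset L l m) * KL_bern noise yes_prob"
      using m bins mass_nonneg[OF positive_pmf] noise_pos noise_less_one yes_prob_bounds
      by (auto intro!: mult_nonneg_nonneg KL_bern_nonneg)
    ultimately show "0 \<le> bin_drift L p \<pi> S (Hset L l m)"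
      by linarith
  qed (use \<open>Q < 2 ^ l\<close> in auto)
  also have "\<dots> = (\<Sum>y\<in>UNIV. prob_obs L p \<pi> S y * Unest L l (post L p \<pi> S y)) - Unest L l \<pi>"
    by (rule Unest_drift_eq_sum_bin_drift[symmetric])
  finally show ?thesis .
qed

end

section \<open>The hiePM query rule\<close>

text \<open>If x > 2/3, the heavier child has mass in (1/3, 1/2).\<close>

lemma closest_to_half_bounds:
  fixes x c0 c1 s :: real
  assumes "x = c0 + c1" "1 / 2 \<le> x" "c0 < 1 / 2" "c1 < 1 / 2" "s = x \<or> s = c0 \<or> s = c1"
    and "\<bar>s - 1 / 2\<bar> \<le> \<bar>x - 1 / 2\<bar>" "\<bar>s - 1 / 2\<bar> \<le> \<bar>c0 - 1 / 2\<bar>" "\<bar>s - 1 / 2\<bar> \<le> \<bar>c1 - 1 / 2\<bar>"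
  shows "1 / 3 \<le> s \<and> s \<le> 2 / 3"
  using assms by (auto simp: abs_if split: if_splits)

lemma hie_query_Hset:
  assumes "positive_pmf L \<pi>" "1 \<le> L" "hie_query L \<pi> S"
  obtains l' m' where "S = Hset L l' m'" "1 \<le> l'" "l' \<le> L" "m' < 2 ^ l'"
    "1 / 3 \<le> mass \<pi> S" "l' < L \<Longrightarrow> mass \<pi> S \<le> 2 / 3"
proof -
  obtain ls ms l' m' where ls: "ls \<le> L" "ms < 2 ^ ls"
    and half: "\<exists>m<2 ^ ls. mass \<pi> (Hset L ls m) \<ge> 1 / 2"
    and deeper: "\<forall>l2. ls < l2 \<and> l2 \<le> L \<longrightarrow> (\<forall>m<2 ^ l2. mass \<pi> (Hset L l2 m) < 1 / 2)"
    and heaviest: "\<forall>m<2 ^ ls. mass \<pi> (Hset L ls m) \<le> mass \<pi> (Hset L ls ms)"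
    and cand: "(l', m') \<in> hie_candidates L ls ms"
    and closest: "\<forall>(l2, m2)\<in>hie_candidates L ls ms.
      \<bar>mass \<pi> (Hset L l' m') - 1 / 2\<bar> \<le> \<bar>mass \<pi> (Hset L l2 m2) - 1 / 2\<bar>"
    and S: "S = Hset L l' m'"
    using assms(3) unfolding hie_query_def by blast
  have heavy: "1 / 2 \<le> mass \<pi> (Hset L ls ms)"
    using half heaviest by force
  have "1 \<le> ls"
  proof (rule ccontr)
    assume "\<not> 1 \<le> ls"
    then have "mass \<pi> (Hset L 1 0) < 1 / 2" "mass \<pi> (Hset L 1 1) < 1 / 2"
      using deeper assms(2) by auto
    moreover have "mass \<pi> (cells L) = mass \<pi> (Hset L 1 0) + mass \<pi> (Hset L 1 1)"
      using mass_cells_eq_sum_Hset[OF assms(2)] by (simp add: numeral_2_eq_2)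
    ultimately show False
      using assms(1) by (simp add: positive_pmf_def)
  qed
  show ?thesis
  proof (cases "ls < L")
    case False
    then have "l' = ls" "m' = ms"
      using cand by (auto simp: hie_candidates_def)
    then show ?thesis
      using that S ls \<open>1 \<le> ls\<close> heavy False by auto
  next
    case True
    have children: "2 * ms < 2 ^ (ls + 1)" "2 * ms + 1 < 2 ^ (ls + 1)"
      using ls by auto
    have cand_eq: "hie_candidates L ls ms = {(ls, ms), (ls + 1, 2 * ms), (ls + 1, 2 * ms + 1)}"
      using True by (auto simp: hie_candidates_def)
    then have "1 / 3 \<le> mass \<pi> (Hset L l' m') \<and> mass \<pi> (Hset L l' m') \<le> 2 / 3"
      using cand closest heavy deeper True children
      by (intro closest_to_half_bounds[OF mass_Hset_children[OF True]]) auto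
    moreover have "1 \<le> l'" "l' \<le> L" "m' < 2 ^ l'"
      using cand cand_eq True \<open>1 \<le> ls\<close> ls children by auto
    ultimately show ?thesis
      using that S by auto
  qed
qed

lemma query_noise_Hset_bounds:
  assumes "\<forall>x\<in>{0<..<1}. 0 < p x \<and> p x < 1 / 2" "1 \<le> l" "l \<le> L"
  shows "0 < query_noise L p (Hset L l m)" "query_noise L p (Hset L l m) < 1 / 2"
proof -
  have "(1::real) / 2 ^ l \<in> {0<..<1}"
    using assms(2) by simp
  then show "0 < query_noise L p (Hset L l m)" "query_noise L p (Hset L l m) < 1 / 2"
    using assms by (simp_all add: query_noise_Hset)
qed

lemma query_noise_Hset_le:
  assumes "mono_on {0<..<1} p" "1 \<le> l" "l \<le> L"
  shows "query_noise L p (Hset L l m) \<le> p (1 / 2)"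
proof -
  have "(1::real) / 2 ^ l \<le> 1 / 2"
    using power_increasing[OF assms(2), of "2::real"] by (simp add: field_simps)
  then have "p (1 / 2 ^ l) \<le> p (1 / 2)"
    using assms(2) by (intro mono_onD[OF assms(1)]) auto
  then show ?thesis
    using assms(3) by (simp add: query_noise_Hset)
qed

lemma reach_positive_pmf:
  assumes "reach L p t \<pi>" "1 \<le> L" "\<forall>x\<in>{0<..<1}. 0 < p x \<and> p x < 1 / 2"
  shows "positive_pmf L \<pi>"
  using assms(1)
proof induction
  case init
  have "card (cells L) = 2 ^ L"
    by (simp add: cells_def)
  then show ?case
    by (simp add: positive_pmf_def mass_def cells_def)
next
  case (step t \<pi> S y)
  obtain l' m' where S: "S = Hset L l' m'" "1 \<le> l'" "l' \<le> L" "m' < 2 ^ l'"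
    using hie_query_Hset[OF step.IH assms(2) step.hyps(2)] by blast
  have "0 < query_noise L p S" "query_noise L p S < 1 / 2"
    using query_noise_Hset_bounds[OF assms(3) S(2,3)] by (simp_all add: S(1))
  then interpret noisy_query L p \<pi> S
    using step.IH Hset_subset_cells[OF S(3,4)] by unfold_locales (auto simp: S(1))
  show ?case
    by (rule positive_pmf_post)
qed

theorem lemma8:
  fixes p :: "real \<Rightarrow> real" and L l t :: nat and \<pi> :: "nat \<Rightarrow> real" and S :: "nat set"
  assumes "continuous_on {0<..<1} p"
    and "mono_on {0<..<1} p"
    and "\<forall>x\<in>{0<..<1}. 0 < p x \<and> p x < 1/2"
    and "1 \<le> l" and "l < L"
    and "0 < t"
    and "reach L p t \<pi>"
    and "hie_query L \<pi> S"
  shows "(\<Sum>y\<in>UNIV. prob_obs L p \<pi> S y * Unest L l (post L p \<pi> S y)) - Unest L l \<pi> \<ge> K_h p"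
proof -
  have "1 \<le> L"
    using assms(4,5) by simp
  have pmf: "positive_pmf L \<pi>"
    using reach_positive_pmf[OF assms(7) \<open>1 \<le> L\<close> assms(3)] .
  obtain l' m' where S: "S = Hset L l' m'" "1 \<le> l'" "l' \<le> L" "m' < 2 ^ l'"
    and mass_lower: "1 / 3 \<le> mass \<pi> S" and mass_upper: "l' < L \<Longrightarrow> mass \<pi> S \<le> 2 / 3"
    using hie_query_Hset[OF pmf \<open>1 \<le> L\<close> assms(8)] by blast
  have noise: "0 < query_noise L p S" "query_noise L p S \<le> p (1 / 2)" "p (1 / 2) < 1 / 2"
    using query_noise_Hset_bounds[OF assms(3) S(2,3)] query_noise_Hset_le[OF assms(2) S(2,3)] assms(3)
    by (auto simp: S(1))
  interpret noisy_query L p \<pi> S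
    using pmf S noise Hset_subset_cells by unfold_locales auto
  show ?thesis
  proof (cases "l' \<le> l")
    case True
    then have "K_h p \<le> MI_bsc (mass \<pi> S) noise"
      using mass_lower mass_upper assms(5) noise by (intro K_h_le_MI_bsc) auto
    also have "\<dots> \<le> (\<Sum>y\<in>UNIV. prob_obs L p \<pi> S y * Unest L l (post L p \<pi> S y)) - Unest L l \<pi>"
      using Unest_drift_ge_MI_bsc[OF S(1) True assms(4)] assms(5) by simp
    finally show ?thesis .
  next
    case False
    have "K_h p \<le> KL_bern yes_prob noise"
      using mass_lower mass_le_one[OF pmf query_subset_cells] noise by (intro K_h_le_KL_bern) auto
    also have "\<dots> \<le> (\<Sum>y\<in>UNIV. prob_obs L p \<pi> S y * Unest L l (post L p \<pi> S y)) - Unest L l \<pi>"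
      using Unest_drift_ge_KL_bern[OF S(1) S(4) _ S(3) assms(4)] False by simp
    finally show ?thesis .
  qed
qed

end
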